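(* Let $k\in\mathbb{N}$ and let $\{f_n\}$ be a sequence of functions in $\mathcal{L}^{(k)}_0$ converging to $0$ pointwise on $T$ and such that $\{\|f_n\|_k\}$ is bounded. Then $f_n\to0$ weakly in $\mathcal{L}^{(k)}_0$.
   Context: $T$ is a tree (locally finite, connected, simply connected graph, identified with its vertex set) without terminal vertices, rooted at $o$. $|v|$ is the distance from $o$ to $v$; for $v\ne o$, $v^-$ is the parent of $v$. $T^*=T\setminus\{o\}$, $Df(v)=|f(v)-f(v^-)|$. For $x\ge1$: $\ell_0(x)=1$, $\ell_1(x)=1+\ln x$, $\ell_j(x)=1+\ln\ell_{j-1}(x)$ for $j\ge2$. $\mathcal{L}^{(k)}$ is the space of $f:T\to\mathbb{C}$ with $\sup_{v\in T^*}|v|\prod_{j=0}^{k-1}\ell_j(|v|)Df(v)<\infty$, normed by $\|f\|_k=|f(o)|+\sup_{v\in T^*}|v|\prod_{j=0}^{k-1}\ell_j(|v|)Df(v)$; $\mathcal{L}^{(k)}_0$ is its subspace (with the same norm) of $f$ with $\lim_{|v|\to\infty}|v|\prod_{j=0}^{k-1}\ell_j(|v|)Df(v)=0$. *)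

theory Defs
  imports "HOL-Analysis.Analysis"
begin

text \<open>A rooted tree with vertex set UNIV (of type 'v), root rt, encoded by its parent map par:
  every vertex reaches the root by iterating par; edges are the pairs {v, par v} for v distinct from rt.
  Such a graph is connected and simply connected.\<close>

definition children :: "'v \<Rightarrow> ('v \<Rightarrow> 'v) \<Rightarrow> 'v \<Rightarrow> 'v set" where
  "children rt par v = {w. w \<noteq> rt \<and> par w = v}"

definition vdegree :: "'v \<Rightarrow> ('v \<Rightarrow> 'v) \<Rightarrow> 'v \<Rightarrow> nat" where
  "vdegree rt par v = card (children rt par v) + (if v = rt then 0 else 1)"

definition rooted_tree :: "'v \<Rightarrow> ('v \<Rightarrow> 'v) \<Rightarrow> bool" where
  "rooted_tree rt par \<longleftrightarrow>
     par rt = rt \<and>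
     (\<forall>v. \<exists>n. (par ^^ n) v = rt) \<and>
     (\<forall>v. finite (children rt par v)) \<and>
     (\<forall>v. vdegree rt par v \<ge> 2)"

definition depth :: "'v \<Rightarrow> ('v \<Rightarrow> 'v) \<Rightarrow> 'v \<Rightarrow> nat" where
  "depth rt par v = (LEAST n. (par ^^ n) v = rt)"

fun ell :: "nat \<Rightarrow> real \<Rightarrow> real" where
  "ell 0 x = 1"
| "ell (Suc 0) x = 1 + ln x"
| "ell (Suc (Suc j)) x = 1 + ln (ell (Suc j) x)"

definition weight :: "nat \<Rightarrow> nat \<Rightarrow> real" where
  "weight k m = real m * (\<Prod>j<k. ell j (real m))"

definition Dif :: "('v \<Rightarrow> 'v) \<Rightarrow> ('v \<Rightarrow> complex) \<Rightarrow> 'v \<Rightarrow> real" where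
  "Dif par f v = cmod (f v - f (par v))"

definition wDif :: "nat \<Rightarrow> 'v \<Rightarrow> ('v \<Rightarrow> 'v) \<Rightarrow> ('v \<Rightarrow> complex) \<Rightarrow> 'v \<Rightarrow> real" where
  "wDif k rt par f v = weight k (depth rt par v) * Dif par f v"

definition Lk :: "nat \<Rightarrow> 'v \<Rightarrow> ('v \<Rightarrow> 'v) \<Rightarrow> ('v \<Rightarrow> complex) set" where
  "Lk k rt par = {f. bdd_above (wDif k rt par f ` {v. v \<noteq> rt})}"

definition normk :: "nat \<Rightarrow> 'v \<Rightarrow> ('v \<Rightarrow> 'v) \<Rightarrow> ('v \<Rightarrow> complex) \<Rightarrow> real" where
  "normk k rt par f = cmod (f rt) + (SUP v\<in>{v. v \<noteq> rt}. wDif k rt par f v)"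

definition Lk0 :: "nat \<Rightarrow> 'v \<Rightarrow> ('v \<Rightarrow> 'v) \<Rightarrow> ('v \<Rightarrow> complex) set" where
  "Lk0 k rt par = {f \<in> Lk k rt par.
     \<forall>\<epsilon>>0. \<exists>N. \<forall>v. v \<noteq> rt \<and> depth rt par v \<ge> N \<longrightarrow> wDif k rt par f v < \<epsilon>}"

definition bounded_functional_Lk0 ::
  "nat \<Rightarrow> 'v \<Rightarrow> ('v \<Rightarrow> 'v) \<Rightarrow> (('v \<Rightarrow> complex) \<Rightarrow> complex) \<Rightarrow> bool" where
  "bounded_functional_Lk0 k rt par \<phi> \<longleftrightarrow>
     (\<forall>f\<in>Lk0 k rt par. \<forall>g\<in>Lk0 k rt par. \<phi> (\<lambda>v. f v + g v) = \<phi> f + \<phi> g) \<and>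
     (\<forall>f\<in>Lk0 k rt par. \<forall>c. \<phi> (\<lambda>v. c * f v) = c * \<phi> f) \<and>
     (\<exists>C. \<forall>f\<in>Lk0 k rt par. cmod (\<phi> f) \<le> C * normk k rt par f)"

definition weakly_converges_Lk0 ::
  "nat \<Rightarrow> 'v \<Rightarrow> ('v \<Rightarrow> 'v) \<Rightarrow> (nat \<Rightarrow> 'v \<Rightarrow> complex) \<Rightarrow> ('v \<Rightarrow> complex) \<Rightarrow> bool" where
  "weakly_converges_Lk0 k rt par F g \<longleftrightarrow>
     (\<forall>\<phi>. bounded_functional_Lk0 k rt par \<phi> \<longrightarrow> (\<lambda>n. \<phi> (F n)) \<longlonglongrightarrow> \<phi> g)"

end

theory Submission
  imports Defs
begin

text \<open>
  Truncating F n at level N (composing it with the map that sends each deeper vertex to its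
  ancestor at depth N) leaves a function determined by finitely many values of F n, so a
  bounded functional \<phi> of it tends to 0 by pointwise convergence. The remainder vanishes on the
  first N levels and its weighted differences are bounded by \<open>sup\<^sub>n \<parallel>F n\<parallel>\<^sub>k\<close>.
  A gliding hump shows that \<phi> is uniformly small on such remainders for large N: otherwise
  take h nearly attaining the supremum s of \<open>|\<phi>|\<close> over the ball of functions vanishing at the
  root, truncate it at a level L, and add, with phases aligning the values of \<phi>, a truncated
  function that is constant up to level L and on which \<open>|\<phi>|\<close> is large; the sum stays in the
  ball, but \<phi> of it exceeds s.
\<close>

lemma funpow_depth_eq_root:
  assumes "rooted_tree rt par"
  shows "(par ^^ depth rt par v) v = rt"
proof -
  from assms obtain n where "(par ^^ n) v = rt"
    unfolding rooted_tree_def by blast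
  then show ?thesis
    unfolding depth_def by (rule LeastI)
qed

lemma depth_le_of_funpow: "(par ^^ n) v = rt \<Longrightarrow> depth rt par v \<le> n"
  unfolding depth_def by (rule Least_le)

lemma depth_root [simp]: "depth rt par rt = 0"
  using depth_le_of_funpow[where n = 0 and v = rt] by simp

lemma depth_parent:
  assumes "rooted_tree rt par" "v \<noteq> rt"
  shows "depth rt par v = Suc (depth rt par (par v))"
proof (rule antisym)
  have "(par ^^ Suc (depth rt par (par v))) v = rt"
    using funpow_depth_eq_root[OF assms(1), of "par v"]
    by (simp add: funpow_Suc_right del: funpow.simps)
  then show "depth rt par v \<le> Suc (depth rt par (par v))"
    by (rule depth_le_of_funpow)
next
  obtain m where m: "depth rt par v = Suc m"
    using funpow_depth_eq_root[OF assms(1), of v] assms(2) by (cases "depth rt par v") auto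
  then have "(par ^^ m) (par v) = rt"
    using funpow_depth_eq_root[OF assms(1), of v] by (simp add: funpow_Suc_right del: funpow.simps)
  then show "Suc (depth rt par (par v)) \<le> depth rt par v"
    using m depth_le_of_funpow by fastforce
qed

lemma finite_depth_le:
  assumes "rooted_tree rt par"
  shows "finite {v. depth rt par v \<le> N}"
proof (induction N)
  case 0
  have "v = rt" if "depth rt par v \<le> 0" for v
    using funpow_depth_eq_root[OF assms, of v] that by simp
  then have "{v. depth rt par v \<le> 0} \<subseteq> {rt}"
    by blast
  then show ?case
    by (rule finite_subset) simp
next
  case (Suc N)
  let ?U = "{v. depth rt par v \<le> N}"
  have "{v. depth rt par v \<le> Suc N} \<subseteq> ?U \<union> (\<Union>u\<in>?U. children rt par u)"
  proof
    fix v
    assume v: "v \<in> {v. depth rt par v \<le> Suc N}"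
    show "v \<in> ?U \<union> (\<Union>u\<in>?U. children rt par u)"
    proof (cases "v = rt")
      case False
      then have "v \<in> children rt par (par v)" "par v \<in> ?U"
        using depth_parent[OF assms False] v by (simp_all add: children_def)
      then show ?thesis
        by blast
    qed simp
  qed
  moreover have "finite (children rt par u)" for u
    using assms unfolding rooted_tree_def by blast
  ultimately show ?case
    using Suc by (meson finite_UN_I finite_Un finite_subset)
qed

lemma exists_nonroot:
  assumes "rooted_tree rt par"
  obtains w where "w \<noteq> rt"
proof -
  have "2 \<le> vdegree rt par rt"
    using assms unfolding rooted_tree_def by blast
  then have "2 \<le> card (children rt par rt)"
    by (simp add: vdegree_def)
  then have "children rt par rt \<noteq> {}"
    by auto
  then show ?thesis
    using that by (auto simp: children_def)
qed

lemma ell_ge_one: "1 \<le> x \<Longrightarrow> 1 \<le> ell j x"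
  by (induction j x rule: ell.induct) auto

lemma weight_nonneg: "0 \<le> weight k m"
proof (cases "m = 0")
  case False
  then have "0 \<le> ell j (real m)" for j
    using ell_ge_one[of "real m" j] by simp
  then show ?thesis
    unfolding weight_def by (simp add: prod_nonneg)
qed (simp add: weight_def)

lemma wDif_nonneg: "0 \<le> wDif k rt par f v"
  unfolding wDif_def Dif_def by (simp add: weight_nonneg)

lemma Dif_lincomb_le:
  "Dif par (\<lambda>x. a * f x + b * g x) v \<le> cmod a * Dif par f v + cmod b * Dif par g v"
proof -
  have "a * f v + b * g v - (a * f (par v) + b * g (par v))
      = a * (f v - f (par v)) + b * (g v - g (par v))"
    by (simp add: algebra_simps)
  moreover have "cmod (a * (f v - f (par v)) + b * (g v - g (par v)))
      \<le> cmod (a * (f v - f (par v))) + cmod (b * (g v - g (par v)))"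
    by (rule norm_triangle_ineq)
  ultimately show ?thesis
    unfolding Dif_def by (simp add: norm_mult)
qed

lemma wDif_lincomb_le:
  "wDif k rt par (\<lambda>x. a * f x + b * g x) v
     \<le> cmod a * wDif k rt par f v + cmod b * wDif k rt par g v"
proof -
  have "weight k (depth rt par v) * Dif par (\<lambda>x. a * f x + b * g x) v
      \<le> weight k (depth rt par v) * (cmod a * Dif par f v + cmod b * Dif par g v)"
    by (rule mult_left_mono[OF Dif_lincomb_le weight_nonneg])
  then show ?thesis
    unfolding wDif_def by (simp add: algebra_simps)
qed

definition ancestor_at :: "'v \<Rightarrow> ('v \<Rightarrow> 'v) \<Rightarrow> nat \<Rightarrow> 'v \<Rightarrow> 'v" where
  "ancestor_at rt par N v = (par ^^ (depth rt par v - N)) v"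

definition trunc :: "'v \<Rightarrow> ('v \<Rightarrow> 'v) \<Rightarrow> nat \<Rightarrow> ('v \<Rightarrow> complex) \<Rightarrow> 'v \<Rightarrow> complex" where
  "trunc rt par N f v = f (ancestor_at rt par N v)"

lemma trunc_shallow: "depth rt par v \<le> N \<Longrightarrow> trunc rt par N f v = f v"
  by (simp add: trunc_def ancestor_at_def)

lemma trunc_root [simp]: "trunc rt par N f rt = f rt"
  by (simp add: trunc_shallow)

lemma trunc_parent_deep:
  assumes "rooted_tree rt par" "v \<noteq> rt" "N < depth rt par v"
  shows "trunc rt par N f v = trunc rt par N f (par v)"
proof -
  have "depth rt par v - N = Suc (depth rt par (par v) - N)"
    using depth_parent[OF assms(1,2)] assms(3) by simp
  then show ?thesis
    by (simp add: trunc_def ancestor_at_def funpow_Suc_right del: funpow.simps)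
qed

lemma Dif_trunc:
  assumes "rooted_tree rt par" "v \<noteq> rt"
  shows "Dif par (trunc rt par N f) v = (if depth rt par v \<le> N then Dif par f v else 0)"
  using trunc_shallow[of rt par _ N f] trunc_parent_deep[OF assms] depth_parent[OF assms]
  by (auto simp: Dif_def)

lemma Dif_diff_trunc:
  assumes "rooted_tree rt par" "v \<noteq> rt"
  shows "Dif par (\<lambda>x. f x - trunc rt par N f x) v = (if depth rt par v \<le> N then 0 else Dif par f v)"
  using trunc_shallow[of rt par _ N f] trunc_parent_deep[OF assms] depth_parent[OF assms]
  by (auto simp: Dif_def algebra_simps)

lemma wDif_trunc:
  assumes "rooted_tree rt par" "v \<noteq> rt"
  shows "wDif k rt par (trunc rt par N f) v = (if depth rt par v \<le> N then wDif k rt par f v else 0)"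
  unfolding wDif_def using Dif_trunc[OF assms] by simp

lemma wDif_diff_trunc:
  assumes "rooted_tree rt par" "v \<noteq> rt"
  shows "wDif k rt par (\<lambda>x. f x - trunc rt par N f x) v
    = (if depth rt par v \<le> N then 0 else wDif k rt par f v)"
  unfolding wDif_def using Dif_diff_trunc[OF assms] by simp

lemma zero_in_Lk0: "(\<lambda>x. 0) \<in> Lk0 k rt par"
  unfolding Lk0_def Lk_def wDif_def Dif_def by auto

lemma Lk0_dominated:
  assumes f: "f \<in> Lk0 k rt par" and g: "g \<in> Lk0 k rt par" and "0 \<le> a" "0 \<le> b"
    and dom: "\<And>v. v \<noteq> rt \<Longrightarrow> wDif k rt par h v \<le> a * wDif k rt par f v + b * wDif k rt par g v"
  shows "h \<in> Lk0 k rt par"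
proof -
  have dom_le: "wDif k rt par h v \<le> a * Bf + b * Bg"
    if "v \<noteq> rt" "wDif k rt par f v \<le> Bf" "wDif k rt par g v \<le> Bg" for v Bf Bg
  proof -
    have "a * wDif k rt par f v \<le> a * Bf" "b * wDif k rt par g v \<le> b * Bg"
      using that \<open>0 \<le> a\<close> \<open>0 \<le> b\<close> by (simp_all add: mult_left_mono)
    then show ?thesis
      using dom[OF that(1)] by linarith
  qed
  obtain Bf where Bf: "\<And>v. v \<noteq> rt \<Longrightarrow> wDif k rt par f v \<le> Bf"
    using f unfolding Lk0_def Lk_def bdd_above_def by auto
  obtain Bg where Bg: "\<And>v. v \<noteq> rt \<Longrightarrow> wDif k rt par g v \<le> Bg"
    using g unfolding Lk0_def Lk_def bdd_above_def by auto
  have "bdd_above (wDif k rt par h ` {v. v \<noteq> rt})"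
    by (rule bdd_aboveI2[where M = "a * Bf + b * Bg"]) (simp add: dom_le Bf Bg)
  moreover have "\<exists>N. \<forall>v. v \<noteq> rt \<and> N \<le> depth rt par v \<longrightarrow> wDif k rt par h v < \<epsilon>"
    if "0 < \<epsilon>" for \<epsilon>
  proof -
    define \<delta> where "\<delta> = \<epsilon> / (a + b + 1)"
    have "0 < \<delta>"
      using that \<open>0 \<le> a\<close> \<open>0 \<le> b\<close> by (simp add: \<delta>_def)
    then have "a * \<delta> + b * \<delta> < (a + b + 1) * \<delta>"
      by (simp add: algebra_simps)
    also have "\<dots> = \<epsilon>"
      using \<open>0 \<le> a\<close> \<open>0 \<le> b\<close> by (simp add: \<delta>_def)
    finally have "a * \<delta> + b * \<delta> < \<epsilon>" .
    obtain Nf where Nf: "\<And>v. v \<noteq> rt \<Longrightarrow> Nf \<le> depth rt par v \<Longrightarrow> wDif k rt par f v < \<delta>"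
      using f \<open>0 < \<delta>\<close> unfolding Lk0_def by blast
    obtain Ng where Ng: "\<And>v. v \<noteq> rt \<Longrightarrow> Ng \<le> depth rt par v \<Longrightarrow> wDif k rt par g v < \<delta>"
      using g \<open>0 < \<delta>\<close> unfolding Lk0_def by blast
    have "wDif k rt par h v < \<epsilon>" if "v \<noteq> rt" "max Nf Ng \<le> depth rt par v" for v
    proof -
      have "wDif k rt par f v \<le> \<delta>" "wDif k rt par g v \<le> \<delta>"
        using Nf[OF that(1)] Ng[OF that(1)] that(2) by simp_all
      from dom_le[OF that(1) this] show ?thesis
        using \<open>a * \<delta> + b * \<delta> < \<epsilon>\<close> by linarith
    qed
    then show ?thesis
      by blast
  qed
  ultimately show ?thesis
    unfolding Lk0_def Lk_def by blast
qed

lemma Lk0_lincomb: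
  "f \<in> Lk0 k rt par \<Longrightarrow> g \<in> Lk0 k rt par \<Longrightarrow> (\<lambda>x. a * f x + b * g x) \<in> Lk0 k rt par"
  by (rule Lk0_dominated[of f _ _ _ g "cmod a" "cmod b"]) (simp_all add: wDif_lincomb_le)

lemma Lk0_diff:
  assumes "f \<in> Lk0 k rt par" "g \<in> Lk0 k rt par"
  shows "(\<lambda>x. f x - g x) \<in> Lk0 k rt par"
  using Lk0_lincomb[OF assms, of 1 "-1"] by simp

lemma Lk0_trunc:
  assumes "rooted_tree rt par" "f \<in> Lk0 k rt par"
  shows "trunc rt par N f \<in> Lk0 k rt par"
  by (rule Lk0_dominated[OF assms(2,2), of 1 0]) (simp_all add: wDif_trunc[OF assms(1)] wDif_nonneg)

lemma wDif_le_normk: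
  assumes "f \<in> Lk k rt par" "v \<noteq> rt"
  shows "wDif k rt par f v \<le> normk k rt par f - cmod (f rt)"
proof -
  have "wDif k rt par f v \<le> (SUP w\<in>{w. w \<noteq> rt}. wDif k rt par f w)"
    using assms unfolding Lk_def by (intro cSUP_upper) auto
  then show ?thesis
    unfolding normk_def by simp
qed

lemma normk_le_of_wDif_le:
  assumes "rooted_tree rt par" "\<And>v. v \<noteq> rt \<Longrightarrow> wDif k rt par f v \<le> B"
  shows "normk k rt par f \<le> cmod (f rt) + B"
proof -
  obtain w where "w \<noteq> rt"
    using exists_nonroot[OF assms(1)] .
  then have "(SUP v\<in>{v. v \<noteq> rt}. wDif k rt par f v) \<le> B"
    using assms(2) by (intro cSUP_least) auto
  then show ?thesis
    unfolding normk_def by simp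
qed

lemma normk_nonneg:
  assumes "rooted_tree rt par" "f \<in> Lk k rt par"
  shows "0 \<le> normk k rt par f"
proof -
  obtain w where "w \<noteq> rt"
    using exists_nonroot[OF assms(1)] .
  from wDif_le_normk[OF assms(2) this] wDif_nonneg[of k rt par f w] norm_ge_zero[of "f rt"]
  show ?thesis
    by linarith
qed

lemma bounded_functional_lincomb:
  assumes "bounded_functional_Lk0 k rt par \<phi>" "f \<in> Lk0 k rt par" "g \<in> Lk0 k rt par"
  shows "\<phi> (\<lambda>x. a * f x + b * g x) = a * \<phi> f + b * \<phi> g"
proof -
  have add: "\<phi> (\<lambda>x. f' x + g' x) = \<phi> f' + \<phi> g'" if "f' \<in> Lk0 k rt par" "g' \<in> Lk0 k rt par" for f' g'
    using assms(1) that unfolding bounded_functional_Lk0_def by blast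
  have scale: "\<phi> (\<lambda>x. c * f' x) = c * \<phi> f'" if "f' \<in> Lk0 k rt par" for c f'
    using assms(1) that unfolding bounded_functional_Lk0_def by blast
  have "(\<lambda>x. a * f x) \<in> Lk0 k rt par" "(\<lambda>x. b * g x) \<in> Lk0 k rt par"
    using Lk0_lincomb[OF assms(2,2), of a 0] Lk0_lincomb[OF assms(3,3), of b 0] by simp_all
  then show ?thesis
    using add scale assms(2,3) by simp
qed

lemma bounded_functional_diff:
  assumes "bounded_functional_Lk0 k rt par \<phi>" "f \<in> Lk0 k rt par" "g \<in> Lk0 k rt par"
  shows "\<phi> (\<lambda>x. f x - g x) = \<phi> f - \<phi> g"
  using bounded_functional_lincomb[OF assms, of 1 "-1"] by simp

lemma bounded_functional_zero:
  assumes "bounded_functional_Lk0 k rt par \<phi>"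
  shows "\<phi> (\<lambda>x. 0) = 0"
  using bounded_functional_lincomb[OF assms zero_in_Lk0 zero_in_Lk0, of 0 0] by simp

lemma bounded_functional_bound:
  assumes "rooted_tree rt par" "bounded_functional_Lk0 k rt par \<phi>"
  obtains C where "0 \<le> C" "\<And>f. f \<in> Lk0 k rt par \<Longrightarrow> cmod (\<phi> f) \<le> C * normk k rt par f"
proof -
  obtain C where C: "\<And>f. f \<in> Lk0 k rt par \<Longrightarrow> cmod (\<phi> f) \<le> C * normk k rt par f"
    using assms(2) unfolding bounded_functional_Lk0_def by blast
  have "cmod (\<phi> f) \<le> \<bar>C\<bar> * normk k rt par f" if "f \<in> Lk0 k rt par" for f
  proof -
    have "0 \<le> normk k rt par f"
      using normk_nonneg[OF assms(1)] that unfolding Lk0_def by blast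
    then have "C * normk k rt par f \<le> \<bar>C\<bar> * normk k rt par f"
      by (simp add: mult_right_mono)
    then show ?thesis
      using C[OF that] by linarith
  qed
  then show ?thesis
    using that[of "\<bar>C\<bar>"] by simp
qed

lemma normk_diff_trunc_tendsto:
  assumes "rooted_tree rt par" "f \<in> Lk0 k rt par"
  shows "(\<lambda>N. normk k rt par (\<lambda>x. f x - trunc rt par N f x)) \<longlonglongrightarrow> 0"
proof (rule LIMSEQ_I)
  fix \<epsilon> :: real
  assume "0 < \<epsilon>"
  have "\<forall>\<epsilon>>0. \<exists>N. \<forall>v. v \<noteq> rt \<and> N \<le> depth rt par v \<longrightarrow> wDif k rt par f v < \<epsilon>"
    using assms(2) unfolding Lk0_def by blast
  moreover have "0 < \<epsilon> / 2"
    using \<open>0 < \<epsilon>\<close> by simp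
  ultimately obtain N0
    where N0: "\<forall>v. v \<noteq> rt \<and> N0 \<le> depth rt par v \<longrightarrow> wDif k rt par f v < \<epsilon> / 2"
    by blast
  have "norm (normk k rt par (\<lambda>x. f x - trunc rt par N f x) - 0) < \<epsilon>" if "N0 \<le> N" for N
  proof -
    have "wDif k rt par (\<lambda>x. f x - trunc rt par N f x) v \<le> \<epsilon> / 2" if "v \<noteq> rt" for v
    proof (cases "depth rt par v \<le> N")
      case False
      then have "wDif k rt par f v < \<epsilon> / 2"
        using N0 that \<open>N0 \<le> N\<close> by simp
      then show ?thesis
        using False by (simp add: wDif_diff_trunc[OF assms(1) that])
    qed (use \<open>0 < \<epsilon>\<close> wDif_diff_trunc[OF assms(1) that] in simp)
    then have "normk k rt par (\<lambda>x. f x - trunc rt par N f x)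
        \<le> cmod (f rt - trunc rt par N f rt) + \<epsilon> / 2"
      by (rule normk_le_of_wDif_le[OF assms(1)])
    then have "normk k rt par (\<lambda>x. f x - trunc rt par N f x) \<le> \<epsilon> / 2"
      by simp
    moreover have "0 \<le> normk k rt par (\<lambda>x. f x - trunc rt par N f x)"
      using normk_nonneg[OF assms(1)] Lk0_diff[OF assms(2) Lk0_trunc[OF assms]]
      unfolding Lk0_def by blast
    ultimately show ?thesis
      using \<open>0 < \<epsilon>\<close> by simp
  qed
  then show "\<exists>N0. \<forall>N\<ge>N0. norm (normk k rt par (\<lambda>x. f x - trunc rt par N f x) - 0) < \<epsilon>"
    by blast
qed

lemma bounded_functional_trunc_tendsto:
  assumes "rooted_tree rt par" "bounded_functional_Lk0 k rt par \<phi>" "f \<in> Lk0 k rt par"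
  shows "(\<lambda>N. \<phi> (trunc rt par N f)) \<longlonglongrightarrow> \<phi> f"
proof -
  obtain C where C: "\<And>g. g \<in> Lk0 k rt par \<Longrightarrow> cmod (\<phi> g) \<le> C * normk k rt par g"
    using bounded_functional_bound[OF assms(1,2)] by blast
  have bound: "cmod (\<phi> f - \<phi> (trunc rt par N f))
      \<le> C * normk k rt par (\<lambda>x. f x - trunc rt par N f x)" for N
    using C[OF Lk0_diff[OF assms(3) Lk0_trunc[OF assms(1,3)]]]
    by (simp add: bounded_functional_diff[OF assms(2,3) Lk0_trunc[OF assms(1,3)]])
  have "(\<lambda>N. \<phi> f - \<phi> (trunc rt par N f)) \<longlonglongrightarrow> 0"
    by (rule Lim_null_comparison[OF always_eventually
          tendsto_mult_right_zero[OF normk_diff_trunc_tendsto[OF assms(1,3)]]])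
      (use bound in blast)
  from tendsto_diff[OF tendsto_const[of "\<phi> f"] this] show ?thesis
    by simp
qed

lemma bounded_functional_trunc_split:
  assumes "rooted_tree rt par" "bounded_functional_Lk0 k rt par \<phi>" "f \<in> Lk0 k rt par"
  shows "\<phi> f = \<phi> (trunc rt par N f) + \<phi> (\<lambda>x. f x - trunc rt par N f x)"
  using bounded_functional_diff[OF assms(2,3) Lk0_trunc[OF assms(1,3)]] by simp

lemma bounded_functional_trunc_norm_gt:
  assumes "rooted_tree rt par" "bounded_functional_Lk0 k rt par \<phi>" "f \<in> Lk0 k rt par"
    and "c < cmod (\<phi> f)"
  obtains L where "c < cmod (\<phi> (trunc rt par L f))"
proof -
  have "\<forall>\<^sub>F L in sequentially. c < cmod (\<phi> (trunc rt par L f))"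
    using tendsto_norm[OF bounded_functional_trunc_tendsto[OF assms(1-3)]] assms(4)
    by (rule order_tendstoD(1))
  then show ?thesis
    using that eventually_happens'[OF sequentially_bot] by blast
qed

lemma normk_trunc_le:
  assumes "rooted_tree rt par"
  shows "normk k rt par (trunc rt par N f)
    \<le> cmod (f rt) + (\<Sum>v | v \<noteq> rt \<and> depth rt par v \<le> N. wDif k rt par f v)"
proof -
  let ?A = "{v. v \<noteq> rt \<and> depth rt par v \<le> N}"
  have "finite ?A"
    using finite_depth_le[OF assms] by (rule finite_subset[rotated]) blast
  have "wDif k rt par (trunc rt par N f) v \<le> (\<Sum>v\<in>?A. wDif k rt par f v)" if "v \<noteq> rt" for v
  proof (cases "depth rt par v \<le> N")
    case True
    then have "wDif k rt par f v \<le> (\<Sum>v\<in>?A. wDif k rt par f v)"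
      using \<open>finite ?A\<close> that by (intro member_le_sum) (simp_all add: wDif_nonneg)
    then show ?thesis
      using True by (simp add: wDif_trunc[OF assms that])
  next
    case False
    then show ?thesis
      by (simp add: wDif_trunc[OF assms that] sum_nonneg wDif_nonneg)
  qed
  then show ?thesis
    using normk_le_of_wDif_le[OF assms] by (metis trunc_root)
qed

lemma bounded_functional_trunc_pointwise_tendsto:
  assumes "rooted_tree rt par" "bounded_functional_Lk0 k rt par \<phi>"
    and "\<And>n. F n \<in> Lk0 k rt par" and "\<And>v. (\<lambda>n. F n v) \<longlonglongrightarrow> 0"
  shows "(\<lambda>n. \<phi> (trunc rt par N (F n))) \<longlonglongrightarrow> 0"
proof -
  obtain C where "0 \<le> C" and C: "\<And>g. g \<in> Lk0 k rt par \<Longrightarrow> cmod (\<phi> g) \<le> C * normk k rt par g"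
    using bounded_functional_bound[OF assms(1,2)] by blast
  let ?bound = "\<lambda>n. cmod (F n rt) + (\<Sum>v | v \<noteq> rt \<and> depth rt par v \<le> N. wDif k rt par (F n) v)"
  have "(\<lambda>n. wDif k rt par (F n) v) \<longlonglongrightarrow> 0" for v
    unfolding wDif_def Dif_def using tendsto_diff[OF assms(4)[of v] assms(4)[of "par v"]]
    by (intro tendsto_mult_right_zero tendsto_norm_zero) simp
  then have "?bound \<longlonglongrightarrow> 0"
    by (intro tendsto_add_zero tendsto_norm_zero assms(4) tendsto_null_sum)
  then have lim: "(\<lambda>n. C * ?bound n) \<longlonglongrightarrow> 0"
    by (rule tendsto_mult_right_zero)
  have bound: "\<forall>n. cmod (\<phi> (trunc rt par N (F n))) \<le> C * ?bound n"
    using C[OF Lk0_trunc[OF assms(1,3)]] mult_left_mono[OF normk_trunc_le[OF assms(1)] \<open>0 \<le> C\<close>]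
    by (meson order_trans)
  show ?thesis
    by (rule Lim_null_comparison[OF always_eventually lim]) (use bound in simp)
qed

lemma cnj_sgn_mult_self: "cnj (sgn z) * z = complex_of_real (cmod z)"
proof (cases "z = 0")
  case False
  have "cnj z * z = complex_of_real (cmod z) * complex_of_real (cmod z)"
    by (metis complex_norm_square mult.commute of_real_mult power2_eq_square)
  then show ?thesis
    using False by (simp add: sgn_div_norm scaleR_conv_of_real field_simps)
qed simp

definition flat_ball :: "nat \<Rightarrow> 'v \<Rightarrow> ('v \<Rightarrow> 'v) \<Rightarrow> nat \<Rightarrow> real \<Rightarrow> ('v \<Rightarrow> complex) set" where
  "flat_ball k rt par N R = {g \<in> Lk0 k rt par. g rt = 0
     \<and> (\<forall>v. v \<noteq> rt \<longrightarrow> wDif k rt par g v \<le> R)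
     \<and> (\<forall>v. v \<noteq> rt \<and> depth rt par v \<le> N \<longrightarrow> Dif par g v = 0)}"

lemma trunc_in_flat_ball:
  assumes "rooted_tree rt par" "g \<in> flat_ball k rt par N R"
  shows "trunc rt par L g \<in> flat_ball k rt par N R"
proof -
  have "g \<in> Lk0 k rt par" "g rt = 0" and bound: "\<And>v. v \<noteq> rt \<Longrightarrow> wDif k rt par g v \<le> R"
    and flat: "\<And>v. v \<noteq> rt \<Longrightarrow> depth rt par v \<le> N \<Longrightarrow> Dif par g v = 0"
    using assms(2) unfolding flat_ball_def by blast+
  have "wDif k rt par (trunc rt par L g) v \<le> R" if "v \<noteq> rt" for v
    using bound[OF that] wDif_nonneg[of k rt par g v] by (simp add: wDif_trunc[OF assms(1) that])
  moreover have "Dif par (trunc rt par L g) v = 0" if "v \<noteq> rt" "depth rt par v \<le> N" for v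
    using flat[OF that] by (simp add: Dif_trunc[OF assms(1) that(1)])
  ultimately show ?thesis
    unfolding flat_ball_def
    using Lk0_trunc[OF assms(1) \<open>g \<in> Lk0 k rt par\<close>] \<open>g rt = 0\<close> by simp
qed

lemma lincomb_in_flat_ball:
  assumes h: "h \<in> flat_ball k rt par N R" and g: "g \<in> flat_ball k rt par L R" and "N \<le> L"
    and h_flat: "\<And>v. v \<noteq> rt \<Longrightarrow> L < depth rt par v \<Longrightarrow> Dif par h v = 0"
    and "cmod a \<le> 1" "cmod b \<le> 1"
  shows "(\<lambda>x. a * h x + b * g x) \<in> flat_ball k rt par N R"
proof -
  have "h \<in> Lk0 k rt par" "h rt = 0" and h_bound: "\<And>v. v \<noteq> rt \<Longrightarrow> wDif k rt par h v \<le> R"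
    and h_low: "\<And>v. v \<noteq> rt \<Longrightarrow> depth rt par v \<le> N \<Longrightarrow> Dif par h v = 0"
    using h unfolding flat_ball_def by blast+
  have "g \<in> Lk0 k rt par" "g rt = 0" and g_bound: "\<And>v. v \<noteq> rt \<Longrightarrow> wDif k rt par g v \<le> R"
    and g_low: "\<And>v. v \<noteq> rt \<Longrightarrow> depth rt par v \<le> L \<Longrightarrow> Dif par g v = 0"
    using g unfolding flat_ball_def by blast+
  have "wDif k rt par (\<lambda>x. a * h x + b * g x) v \<le> R" if "v \<noteq> rt" for v
  proof (cases "depth rt par v \<le> L")
    case True
    then have "wDif k rt par g v = 0"
      using g_low[OF that] by (simp add: wDif_def)
    moreover have "cmod a * wDif k rt par h v \<le> R"
      using h_bound[OF that] \<open>cmod a \<le> 1\<close> wDif_nonneg[of k rt par h v]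
      by (meson mult_left_le_one_le norm_ge_zero order_trans)
    ultimately show ?thesis
      using wDif_lincomb_le[of k rt par a h b g v] by simp
  next
    case False
    then have "wDif k rt par h v = 0"
      using h_flat[OF that] by (simp add: wDif_def)
    moreover have "cmod b * wDif k rt par g v \<le> R"
      using g_bound[OF that] \<open>cmod b \<le> 1\<close> wDif_nonneg[of k rt par g v]
      by (meson mult_left_le_one_le norm_ge_zero order_trans)
    ultimately show ?thesis
      using wDif_lincomb_le[of k rt par a h b g v] by simp
  qed
  moreover have "Dif par (\<lambda>x. a * h x + b * g x) v = 0" if "v \<noteq> rt" "depth rt par v \<le> N" for v
    using Dif_lincomb_le[of par a h b g v] h_low[OF that] g_low[OF that(1)] that(2) \<open>N \<le> L\<close>
    by (simp add: Dif_def)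
  ultimately show ?thesis
    unfolding flat_ball_def
    using Lk0_lincomb[OF \<open>h \<in> Lk0 k rt par\<close> \<open>g \<in> Lk0 k rt par\<close>] \<open>h rt = 0\<close> \<open>g rt = 0\<close> by simp
qed

lemma diff_trunc_in_flat_ball:
  assumes "rooted_tree rt par" "f \<in> Lk0 k rt par" "normk k rt par f \<le> M"
  shows "(\<lambda>x. f x - trunc rt par N f x) \<in> flat_ball k rt par N M"
proof -
  have "f \<in> Lk k rt par"
    using assms(2) unfolding Lk0_def by blast
  have "wDif k rt par (\<lambda>x. f x - trunc rt par N f x) v \<le> M" if "v \<noteq> rt" for v
  proof -
    have "wDif k rt par f v \<le> M"
      using wDif_le_normk[OF \<open>f \<in> Lk k rt par\<close> that] assms(3) norm_ge_zero[of "f rt"]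
      by linarith
    then show ?thesis
      using wDif_nonneg[of k rt par f v] by (simp add: wDif_diff_trunc[OF assms(1) that])
  qed
  moreover have "Dif par (\<lambda>x. f x - trunc rt par N f x) v = 0"
    if "v \<noteq> rt" "depth rt par v \<le> N" for v
    using that by (simp add: Dif_diff_trunc[OF assms(1) that(1)])
  ultimately show ?thesis
    unfolding flat_ball_def using Lk0_diff[OF assms(2) Lk0_trunc[OF assms(1,2)]] by simp
qed

lemma bounded_functional_small_on_flat_ball:
  assumes rt: "rooted_tree rt par" and \<phi>: "bounded_functional_Lk0 k rt par \<phi>" and "0 < \<epsilon>"
  shows "\<exists>N. \<forall>g\<in>flat_ball k rt par N R. cmod (\<phi> g) \<le> \<epsilon>"
proof (rule ccontr)
  assume "\<not> ?thesis"
  then have large: "\<exists>g\<in>flat_ball k rt par N R. \<epsilon> < cmod (\<phi> g)" for N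
    by (meson not_le)
  let ?B = "flat_ball k rt par 0 R"
  define s where "s = (SUP g\<in>?B. cmod (\<phi> g))"
  obtain C where "0 \<le> C" and C: "\<And>g. g \<in> Lk0 k rt par \<Longrightarrow> cmod (\<phi> g) \<le> C * normk k rt par g"
    using bounded_functional_bound[OF rt \<phi>] by blast
  have "cmod (\<phi> g) \<le> C * R" if "g \<in> ?B" for g
  proof -
    have "normk k rt par g \<le> R"
      using normk_le_of_wDif_le[OF rt, of k g R] that unfolding flat_ball_def by simp
    then show ?thesis
      using C[of g] that \<open>0 \<le> C\<close> unfolding flat_ball_def
      by (metis (no_types, lifting) mem_Collect_eq mult_left_mono order_trans)
  qed
  then have bdd: "bdd_above ((\<lambda>g. cmod (\<phi> g)) ` ?B)"
    by (rule bdd_aboveI2)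
  have "?B \<noteq> {}"
    using large[of 0] by blast
  then obtain h where "h \<in> ?B" "s - \<epsilon> < cmod (\<phi> h)"
    using less_cSUP_iff[OF _ bdd, of "s - \<epsilon>"] \<open>0 < \<epsilon>\<close> unfolding s_def by auto
  then obtain L where hL: "s - \<epsilon> < cmod (\<phi> (trunc rt par L h))"
    using bounded_functional_trunc_norm_gt[OF rt \<phi>] unfolding flat_ball_def by blast
  obtain g where "g \<in> flat_ball k rt par L R" "\<epsilon> < cmod (\<phi> g)"
    using large by blast
  then obtain L' where gL: "\<epsilon> < cmod (\<phi> (trunc rt par L' g))"
    using bounded_functional_trunc_norm_gt[OF rt \<phi>] unfolding flat_ball_def by blast
  define h' where "h' = trunc rt par L h"
  define g' where "g' = trunc rt par L' g"
  have h': "h' \<in> ?B" and g': "g' \<in> flat_ball k rt par L R"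
    unfolding h'_def g'_def by (rule trunc_in_flat_ball[OF rt]; fact)+
  \<comment> \<open>h' is constant beyond level L and g' up to level L, so the rotated sum u stays in
    the ball, while the rotations make the values of \<phi> add up: \<open>\<phi> u > s\<close>.\<close>
  define u where "u = (\<lambda>x. cnj (sgn (\<phi> h')) * h' x + cnj (sgn (\<phi> g')) * g' x)"
  have "u \<in> ?B"
    unfolding u_def
  proof (rule lincomb_in_flat_ball[OF h' g'])
    show "Dif par h' v = 0" if "v \<noteq> rt" "L < depth rt par v" for v
      using that by (simp add: h'_def Dif_trunc[OF rt])
  qed (simp_all add: norm_sgn)
  then have "cmod (\<phi> u) \<le> s"
    unfolding s_def using bdd by (rule cSUP_upper)
  moreover have "\<phi> u = complex_of_real (cmod (\<phi> h') + cmod (\<phi> g'))"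
    using bounded_functional_lincomb[OF \<phi>] h' g' unfolding u_def flat_ball_def
    by (simp add: cnj_sgn_mult_self)
  then have "cmod (\<phi> u) = cmod (\<phi> h') + cmod (\<phi> g')"
    by (simp only: norm_of_real) simp
  ultimately show False
    using hL gL unfolding h'_def g'_def by linarith
qed

lemma bounded_functional_tendsto_zero:
  assumes "rooted_tree rt par" and \<phi>: "bounded_functional_Lk0 k rt par \<phi>"
    and F: "\<And>n. F n \<in> Lk0 k rt par" and "\<And>v. (\<lambda>n. F n v) \<longlonglongrightarrow> 0"
    and M: "\<And>n. normk k rt par (F n) \<le> M"
  shows "(\<lambda>n. \<phi> (F n)) \<longlonglongrightarrow> 0"
proof (rule LIMSEQ_I)
  fix r :: real
  assume "0 < r"
  then obtain N where tail: "\<And>g. g \<in> flat_ball k rt par N M \<Longrightarrow> cmod (\<phi> g) \<le> r / 2"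
    using bounded_functional_small_on_flat_ball[OF assms(1) \<phi>, of "r / 2" M] by auto
  have "\<forall>\<^sub>F n in sequentially. cmod (\<phi> (trunc rt par N (F n))) < r / 2"
    using order_tendstoD(2)[OF tendsto_norm_zero[OF
          bounded_functional_trunc_pointwise_tendsto[OF assms(1-4)]], of "r / 2"] \<open>0 < r\<close>
    by simp
  then obtain n0 where head: "\<And>n. n0 \<le> n \<Longrightarrow> cmod (\<phi> (trunc rt par N (F n))) < r / 2"
    unfolding eventually_sequentially by blast
  have "cmod (\<phi> (F n)) < r" if "n0 \<le> n" for n
  proof -
    have "cmod (\<phi> (F n))
        \<le> cmod (\<phi> (trunc rt par N (F n))) + cmod (\<phi> (\<lambda>x. F n x - trunc rt par N (F n) x))"
      by (subst bounded_functional_trunc_split[OF assms(1) \<phi> F]) (rule norm_triangle_ineq)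
    then show ?thesis
      using head[OF that] tail[OF diff_trunc_in_flat_ball[OF assms(1) F[of n] M[of n]]]
      by linarith
  qed
  then show "\<exists>n0. \<forall>n\<ge>n0. cmod (\<phi> (F n) - 0) < r"
    by auto
qed

theorem proposition2p11:
  fixes rt :: 'v and par :: "'v \<Rightarrow> 'v" and k :: nat and F :: "nat \<Rightarrow> 'v \<Rightarrow> complex"
  assumes "rooted_tree rt par"
    and "\<forall>n. F n \<in> Lk0 k rt par"
    and "\<forall>v. (\<lambda>n. F n v) \<longlonglongrightarrow> 0"
    and "\<exists>M. \<forall>n. normk k rt par (F n) \<le> M"
  shows "weakly_converges_Lk0 k rt par F (\<lambda>v. 0)"
  unfolding weakly_converges_Lk0_def
proof (intro allI impI)
  fix \<phi>
  assume \<phi>: "bounded_functional_Lk0 k rt par \<phi>"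
  obtain M where "\<And>n. normk k rt par (F n) \<le> M"
    using assms(4) by blast
  then have "(\<lambda>n. \<phi> (F n)) \<longlonglongrightarrow> 0"
    using bounded_functional_tendsto_zero[OF assms(1) \<phi>] assms(2,3) by blast
  then show "(\<lambda>n. \<phi> (F n)) \<longlonglongrightarrow> \<phi> (\<lambda>v. 0)"
    by (simp add: bounded_functional_zero[OF \<phi>])
qed

end
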